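(* Let $\Phi$ be any incoherent operation (IO) acting on a single qubit $\mathcal{H}_2$ with respect to the computational basis $\{|1\rangle,|2\rangle\}$. Then $\Phi$ admits a Kraus decomposition $\Phi(\rho)=\sum_{n=1}^4 K_n\rho K_n^\dagger$ consisting of four incoherent Kraus operators of the form $$K_1=\begin{pmatrix} a_1 & b_1\\ 0&0\end{pmatrix},\quad K_2=\begin{pmatrix} 0&0\\ a_2 & b_2\end{pmatrix},\quad K_3=\begin{pmatrix} a_3 & 0\\ 0& b_3\end{pmatrix},\quad K_4=\begin{pmatrix} 0 & b_4\\ a_4& 0\end{pmatrix},$$ where $a_1,\dots,a_4\in\mathbb{R}$ and $b_1,\dots,b_4\in\mathbb{C}$ satisfy $\sum_{i=1}^4 a_i^2=\sum_{j=1}^4|b_j|^2=1$ and $a_1b_1+a_2b_2=0$.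
   Context: Fix an orthonormal basis $\{|i\rangle\}_{i=1}^d$ of $\mathcal{H}_d$. A state is incoherent if it is diagonal in this basis, i.e. of the form $\delta=\sum_{i=1}^d\delta_i|i\rangle\langle i|$ with $\delta_i\ge 0$, $\sum_i\delta_i=1$; let $\mathcal{I}$ denote the set of incoherent states. A completely positive trace-preserving map $\Phi$ is an incoherent operation (IO) if it has a Kraus representation $\Phi(\rho)=\sum_n K_n\rho K_n^\dagger$, $\sum_n K_n^\dagger K_n=I$, such that $K_n\rho K_n^\dagger/\mathrm{Tr}[K_n\rho K_n^\dagger]\in\mathcal{I}$ for all $n$ and all $\rho\in\mathcal{I}$ (whenever the trace is nonzero); such Kraus operators are called incoherent Kraus operators (equivalently, each column of each $K_n$ has at most one nonzero entry). *)

theory Defs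
  imports "Jordan_Normal_Form.Schur_Decomposition"
begin

text \<open>Matrices on H_d are d x d complex matrices (indices 0..d-1 stand for the basis 1..d).\<close>

definition mtrace :: "complex mat \<Rightarrow> complex" where
  "mtrace A = (\<Sum>i<dim_row A. A $$ (i, i))"

definition incoherent_state :: "nat \<Rightarrow> complex mat \<Rightarrow> bool" where
  "incoherent_state d \<delta> \<longleftrightarrow> \<delta> \<in> carrier_mat d d \<and> diagonal_mat \<delta> \<and>
     (\<forall>i<d. \<delta> $$ (i, i) \<in> \<real> \<and> Re (\<delta> $$ (i, i)) \<ge> 0) \<and> mtrace \<delta> = 1"

definition incoherent_kraus :: "nat \<Rightarrow> complex mat \<Rightarrow> bool" where
  "incoherent_kraus d K \<longleftrightarrow> K \<in> carrier_mat d d \<and>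
     (\<forall>\<rho>. incoherent_state d \<rho> \<longrightarrow> mtrace (K * \<rho> * mat_adjoint K) \<noteq> 0 \<longrightarrow>
        incoherent_state d ((1 / mtrace (K * \<rho> * mat_adjoint K)) \<cdot>\<^sub>m (K * \<rho> * mat_adjoint K)))"

definition msum :: "nat \<Rightarrow> (complex mat \<Rightarrow> complex mat) \<Rightarrow> complex mat list \<Rightarrow> complex mat" where
  "msum d f Ks = foldr (\<lambda>K acc. f K + acc) Ks (0\<^sub>m d d)"

definition kraus_apply :: "nat \<Rightarrow> complex mat list \<Rightarrow> complex mat \<Rightarrow> complex mat" where
  "kraus_apply d Ks \<rho> = msum d (\<lambda>K. K * \<rho> * mat_adjoint K) Ks"

definition IO :: "nat \<Rightarrow> (complex mat \<Rightarrow> complex mat) \<Rightarrow> bool" where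
  "IO d \<Phi> \<longleftrightarrow> (\<exists>Ks. (\<forall>K\<in>set Ks. incoherent_kraus d K) \<and>
      msum d (\<lambda>K. mat_adjoint K * K) Ks = 1\<^sub>m d \<and>
      (\<forall>\<rho>\<in>carrier_mat d d. \<Phi> \<rho> = kraus_apply d Ks \<rho>))"

end

theory Submission
  imports Defs
begin

text \<open>A Kraus operator on a qubit is incoherent iff each of its columns has at most one nonzero
entry, so it has one of the four shapes of K1, ..., K4. A Kraus map depends on its operators only
through its Choi matrix, and grouping the given incoherent operators by shape splits the Choi data
into four positive semidefinite 2x2 blocks whose diagonals are tied together by four sums. The
theorem asks to replace each block by a rank-one block with the same off-diagonal entry, keeping
those four sums. The sums link the eight diagonal entries in a single cycle; lowering them around
the cycle defines a monotone self-map of an interval, and a fixed point of it yields exact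
rank-one blocks, i.e. the coefficients a_k and b_k.\<close>

lemma less_2_cases: "(i::nat) < 2 \<longleftrightarrow> i = 0 \<or> i = 1"
  by auto

lemma sum_lessThan_2: "(\<Sum>k<2. f k) = f 0 + f (1::nat)"
  by (simp add: numeral_2_eq_2)

lemma complex_mult_cnj_cmod: "z * cnj z = (complex_of_real (cmod z))\<^sup>2"
  by (metis complex_norm_square of_real_power)

lemma mat_adjoint_carrier: "A \<in> carrier_mat n n \<Longrightarrow> mat_adjoint A \<in> carrier_mat n n"
  unfolding mat_adjoint_def by (simp add: mat_of_rows_def)

lemma mat_adjoint_index:
  "A \<in> carrier_mat n n \<Longrightarrow> i < n \<Longrightarrow> j < n \<Longrightarrow> mat_adjoint A $$ (i, j) = cnj (A $$ (j, i))"
  unfolding mat_adjoint_def by (simp add: mat_of_rows_def)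

lemma sandwich_carrier:
  "K \<in> carrier_mat n n \<Longrightarrow> \<rho> \<in> carrier_mat n n \<Longrightarrow> K * \<rho> * mat_adjoint K \<in> carrier_mat n n"
  using mult_carrier_mat[OF mult_carrier_mat mat_adjoint_carrier] by blast

lemma mtrace_smult: "A \<in> carrier_mat n n \<Longrightarrow> mtrace (c \<cdot>\<^sub>m A) = c * mtrace A"
  unfolding mtrace_def by (simp add: sum_distrib_left)

lemma incoherent_state_normalize:
  assumes "M \<in> carrier_mat d d" "diagonal_mat M"
    and "\<And>i. i < d \<Longrightarrow> M $$ (i, i) \<in> \<real> \<and> 0 \<le> Re (M $$ (i, i))"
    and "mtrace M \<noteq> 0"
  shows "incoherent_state d ((1 / mtrace M) \<cdot>\<^sub>m M)"
proof -
  have "mtrace M = of_real (\<Sum>i<d. Re (M $$ (i, i)))"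
    using assms(1,3) unfolding mtrace_def by (auto intro!: sum.cong simp: Reals_def)
  moreover have "0 \<le> (\<Sum>i<d. Re (M $$ (i, i)))"
    using assms(3) by (intro sum_nonneg) auto
  ultimately obtain t where t: "mtrace M = of_real t" "0 < t"
    using assms(4) by (metis less_eq_real_def of_real_0)
  show ?thesis
    unfolding incoherent_state_def using assms t
    by (auto simp: diagonal_mat_def mtrace_smult)
qed

lemma mult_of_real_mult_cnj: "z * of_real r * cnj z = of_real ((cmod z)\<^sup>2 * r)"
  by (simp add: complex_mult_cnj_cmod mult.commute mult.left_commute)

lemma sandwich_index:
  assumes K: "K \<in> carrier_mat d d" and \<rho>: "\<rho> \<in> carrier_mat d d" and "i < d" "j < d"
  shows "(K * \<rho> * mat_adjoint K) $$ (i, j) =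
    (\<Sum>l<d. \<Sum>m<d. K $$ (i, l) * \<rho> $$ (l, m) * cnj (K $$ (j, m)))"
proof -
  have "(K * \<rho> * mat_adjoint K) $$ (i, j) =
      (\<Sum>l<d. K $$ (i, l) * (\<Sum>m<d. \<rho> $$ (l, m) * cnj (K $$ (j, m))))"
    using assms mat_adjoint_carrier[OF K]
    by (auto simp: scalar_prod_def mat_adjoint_index lessThan_atLeast0 intro!: sum.cong)
  then show ?thesis
    by (simp add: sum_distrib_left mult.assoc)
qed

lemma sandwich_diagonal_index:
  assumes "K \<in> carrier_mat d d" "\<rho> \<in> carrier_mat d d" "diagonal_mat \<rho>" "i < d" "j < d"
  shows "(K * \<rho> * mat_adjoint K) $$ (i, j) = (\<Sum>l<d. K $$ (i, l) * \<rho> $$ (l, l) * cnj (K $$ (j, l)))"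
proof -
  have "(\<Sum>m<d. K $$ (i, l) * \<rho> $$ (l, m) * cnj (K $$ (j, m))) = K $$ (i, l) * \<rho> $$ (l, l) * cnj (K $$ (j, l))"
    if "l < d" for l
  proof -
    have "(\<Sum>m<d. K $$ (i, l) * \<rho> $$ (l, m) * cnj (K $$ (j, m))) =
        (\<Sum>m<d. if m = l then K $$ (i, l) * \<rho> $$ (l, l) * cnj (K $$ (j, l)) else 0)"
      using assms(2,3) that by (intro sum.cong) (auto simp: diagonal_mat_def)
    then show ?thesis
      using that by simp
  qed
  then show ?thesis
    using sandwich_index[OF assms(1,2,4,5)] by simp
qed

lemma incoherent_kraus_columnsI:
  assumes K: "K \<in> carrier_mat d d"
    and cols: "\<And>c i j. c < d \<Longrightarrow> i < d \<Longrightarrow> j < d \<Longrightarrow> i \<noteq> j \<Longrightarrow> K $$ (i, c) * K $$ (j, c) = 0"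
  shows "incoherent_kraus d K"
  unfolding incoherent_kraus_def
proof (intro conjI allI impI K)
  fix \<rho> assume st: "incoherent_state d \<rho>" and tr: "mtrace (K * \<rho> * mat_adjoint K) \<noteq> 0"
  define p where "p l = Re (\<rho> $$ (l, l))" for l
  have \<rho>: "\<rho> \<in> carrier_mat d d" "diagonal_mat \<rho>"
    and p: "\<And>l. l < d \<Longrightarrow> \<rho> $$ (l, l) = of_real (p l) \<and> 0 \<le> p l"
    using st unfolding incoherent_state_def p_def by (auto simp: Reals_def)
  define M where "M = K * \<rho> * mat_adjoint K"
  have M_index: "M $$ (i, j) = (\<Sum>l<d. K $$ (i, l) * of_real (p l) * cnj (K $$ (j, l)))"
    if "i < d" "j < d" for i j
    unfolding M_def using sandwich_diagonal_index[OF K \<rho> that] p by simp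
  have M: "M \<in> carrier_mat d d"
    unfolding M_def using sandwich_carrier[OF K \<rho>(1)] .
  show "incoherent_state d ((1 / mtrace M) \<cdot>\<^sub>m M)"
  proof (rule incoherent_state_normalize[OF M])
    show "M $$ (i, i) \<in> \<real> \<and> 0 \<le> Re (M $$ (i, i))" if "i < d" for i
    proof -
      have "M $$ (i, i) = of_real (\<Sum>l<d. (cmod (K $$ (i, l)))\<^sup>2 * p l)"
        using M_index[OF that that] by (simp add: mult_of_real_mult_cnj)
      moreover have "0 \<le> (\<Sum>l<d. (cmod (K $$ (i, l)))\<^sup>2 * p l)"
        using p by (intro sum_nonneg) simp
      ultimately show ?thesis by simp
    qed
    have "M $$ (i, j) = 0" if "i < d" "j < d" "i \<noteq> j" for i j
    proof -
      have "K $$ (i, l) * of_real (p l) * cnj (K $$ (j, l)) = 0" if "l < d" for l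
        using cols[OF that \<open>i < d\<close> \<open>j < d\<close> \<open>i \<noteq> j\<close>] by auto
      then show ?thesis
        using M_index[OF that(1,2)] by (simp add: sum.neutral)
    qed
    then show "diagonal_mat M"
      using M unfolding diagonal_mat_def by auto
    show "mtrace M \<noteq> 0"
      using tr unfolding M_def .
  qed
qed

lemma incoherent_kraus_column:
  assumes K: "incoherent_kraus d K" and "c < d" "i < d" "j < d" "i \<noteq> j"
  shows "K $$ (i, c) * K $$ (j, c) = 0"
proof -
  have Kc: "K \<in> carrier_mat d d"
    using K unfolding incoherent_kraus_def by auto
  define \<rho> :: "complex mat" where "\<rho> = mat d d (\<lambda>(i, j). if i = c \<and> j = c then 1 else 0)"
  have \<rho>: "\<rho> \<in> carrier_mat d d" "diagonal_mat \<rho>"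
    unfolding \<rho>_def diagonal_mat_def by auto
  have "incoherent_state d \<rho>"
    using \<rho> \<open>c < d\<close> unfolding incoherent_state_def mtrace_def by (auto simp: \<rho>_def)
  define M where "M = K * \<rho> * mat_adjoint K"
  have M_index: "M $$ (i', j') = K $$ (i', c) * cnj (K $$ (j', c))" if "i' < d" "j' < d" for i' j'
  proof -
    have "(\<Sum>l<d. K $$ (i', l) * \<rho> $$ (l, l) * cnj (K $$ (j', l))) =
        (\<Sum>l<d. if l = c then K $$ (i', c) * cnj (K $$ (j', c)) else 0)"
      by (intro sum.cong) (auto simp: \<rho>_def)
    then show ?thesis
      unfolding M_def using sandwich_diagonal_index[OF Kc \<rho> that] \<open>c < d\<close> by simp
  qed
  have M: "M \<in> carrier_mat d d"
    unfolding M_def using sandwich_carrier[OF Kc \<rho>(1)] .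
  show ?thesis
  proof (cases "mtrace M = 0")
    case True
    have "mtrace M = of_real (\<Sum>i'<d. (cmod (K $$ (i', c)))\<^sup>2)"
      using M unfolding mtrace_def by (simp add: M_index complex_mult_cnj_cmod)
    with True have "(\<Sum>i'<d. (cmod (K $$ (i', c)))\<^sup>2) = 0"
      by (metis of_real_eq_0_iff)
    then have "K $$ (i, c) = 0"
      using \<open>i < d\<close> by (simp add: sum_nonneg_eq_0_iff)
    then show ?thesis by simp
  next
    case False
    then have "incoherent_state d ((1 / mtrace M) \<cdot>\<^sub>m M)"
      using K \<open>incoherent_state d \<rho>\<close> unfolding incoherent_kraus_def M_def by blast
    then have "M $$ (i, j) = 0"
      using M False assms(3-5) unfolding incoherent_state_def diagonal_mat_def by auto
    then show ?thesis
      using M_index assms(3,4) by auto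
  qed
qed

lemma incoherent_kraus_iff:
  "incoherent_kraus d K \<longleftrightarrow> K \<in> carrier_mat d d \<and>
     (\<forall>c<d. \<forall>i<d. \<forall>j<d. i \<noteq> j \<longrightarrow> K $$ (i, c) * K $$ (j, c) = 0)"
proof
  assume "incoherent_kraus d K"
  then show "K \<in> carrier_mat d d \<and> (\<forall>c<d. \<forall>i<d. \<forall>j<d. i \<noteq> j \<longrightarrow> K $$ (i, c) * K $$ (j, c) = 0)"
    using incoherent_kraus_column unfolding incoherent_kraus_def by blast
qed (auto intro: incoherent_kraus_columnsI)

text \<open>The entry of the Choi matrix of the Kraus map at ((i, l), (j, m)); the map depends on its
  Kraus operators only through these numbers.\<close>

definition choi :: "complex mat list \<Rightarrow> nat \<Rightarrow> nat \<Rightarrow> nat \<Rightarrow> nat \<Rightarrow> complex" where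
  "choi Ks i l j m = (\<Sum>K\<leftarrow>Ks. K $$ (i, l) * cnj (K $$ (j, m)))"

definition kraus_weight :: "complex mat list \<Rightarrow> nat \<Rightarrow> nat \<Rightarrow> real" where
  "kraus_weight Ks i l = (\<Sum>K\<leftarrow>Ks. (cmod (K $$ (i, l)))\<^sup>2)"

lemma choi_Nil [simp]: "choi [] i l j m = 0"
  by (simp add: choi_def)

lemma choi_Cons [simp]: "choi (K # Ks) i l j m = K $$ (i, l) * cnj (K $$ (j, m)) + choi Ks i l j m"
  by (simp add: choi_def)

lemma kraus_weight_Nil [simp]: "kraus_weight [] i l = 0"
  by (simp add: kraus_weight_def)

lemma kraus_weight_Cons [simp]: "kraus_weight (K # Ks) i l = (cmod (K $$ (i, l)))\<^sup>2 + kraus_weight Ks i l"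
  by (simp add: kraus_weight_def)

lemma choi_same_index: "choi Ks i l i l = of_real (kraus_weight Ks i l)"
  by (induction Ks) (simp_all add: complex_mult_cnj_cmod)

lemma cnj_choi: "cnj (choi Ks i l j m) = choi Ks j m i l"
  by (induction Ks) (simp_all add: mult.commute)

lemma sum_sum_list_swap: "(\<Sum>i\<in>A. \<Sum>x\<leftarrow>xs. f x i) = (\<Sum>x\<leftarrow>xs. \<Sum>i\<in>A. f x i)"
  by (induction xs) (simp_all add: sum.distrib)

lemma msum_carrier: "\<forall>K\<in>set Ks. f K \<in> carrier_mat d d \<Longrightarrow> msum d f Ks \<in> carrier_mat d d"
  unfolding msum_def by (induction Ks) auto

lemma msum_index:
  assumes "\<forall>K\<in>set Ks. f K \<in> carrier_mat d d" "i < d" "j < d"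
  shows "msum d f Ks $$ (i, j) = (\<Sum>K\<leftarrow>Ks. f K $$ (i, j))"
  using assms(1)
proof (induction Ks)
  case (Cons K Ks)
  then have "msum d f Ks \<in> carrier_mat d d"
    by (simp add: msum_carrier)
  with Cons assms(2,3) show ?case
    by (simp add: msum_def)
qed (use assms in \<open>simp add: msum_def\<close>)

lemma kraus_apply_carrier:
  "\<forall>K\<in>set Ks. K \<in> carrier_mat d d \<Longrightarrow> \<rho> \<in> carrier_mat d d \<Longrightarrow>
   kraus_apply d Ks \<rho> \<in> carrier_mat d d"
  unfolding kraus_apply_def by (rule msum_carrier) (use sandwich_carrier in blast)

lemma kraus_apply_index:
  assumes "\<forall>K\<in>set Ks. K \<in> carrier_mat d d" "\<rho> \<in> carrier_mat d d" "i < d" "j < d"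
  shows "kraus_apply d Ks \<rho> $$ (i, j) = (\<Sum>l<d. \<Sum>m<d. \<rho> $$ (l, m) * choi Ks i l j m)"
proof -
  have "kraus_apply d Ks \<rho> $$ (i, j) = (\<Sum>K\<leftarrow>Ks. (K * \<rho> * mat_adjoint K) $$ (i, j))"
    unfolding kraus_apply_def using assms sandwich_carrier by (subst msum_index) auto
  also have "\<dots> = (\<Sum>K\<leftarrow>Ks. \<Sum>l<d. \<Sum>m<d. \<rho> $$ (l, m) * (K $$ (i, l) * cnj (K $$ (j, m))))"
  proof (intro arg_cong[where f = sum_list] map_cong refl)
    fix K assume "K \<in> set Ks"
    then have "K \<in> carrier_mat d d"
      using assms(1) by blast
    then show "(K * \<rho> * mat_adjoint K) $$ (i, j) = (\<Sum>l<d. \<Sum>m<d. \<rho> $$ (l, m) * (K $$ (i, l) * cnj (K $$ (j, m))))"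
      using assms(2-4) by (simp add: sandwich_index ac_simps)
  qed
  also have "\<dots> = (\<Sum>l<d. \<Sum>m<d. \<rho> $$ (l, m) * choi Ks i l j m)"
    by (simp add: sum_sum_list_swap choi_def sum_list_const_mult[symmetric])
  finally show ?thesis .
qed

lemma kraus_apply_eqI:
  assumes Ks: "\<forall>K\<in>set Ks. K \<in> carrier_mat d d" and Ls: "\<forall>K\<in>set Ls. K \<in> carrier_mat d d"
    and choi_eq: "\<And>i l j m. i < d \<Longrightarrow> l < d \<Longrightarrow> j < d \<Longrightarrow> m < d \<Longrightarrow> i < j \<or> i = j \<and> l \<le> m \<Longrightarrow>
      choi Ks i l j m = choi Ls i l j m"
    and \<rho>: "\<rho> \<in> carrier_mat d d"
  shows "kraus_apply d Ks \<rho> = kraus_apply d Ls \<rho>"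
proof -
  have choi_eq_all: "choi Ks i l j m = choi Ls i l j m" if "i < d" "l < d" "j < d" "m < d" for i l j m
  proof (cases "i < j \<or> i = j \<and> l \<le> m")
    case False
    then have "choi Ks j m i l = choi Ls j m i l"
      using that by (intro choi_eq) auto
    then show ?thesis
      by (metis cnj_choi)
  qed (use choi_eq that in blast)
  show ?thesis
    using kraus_apply_carrier[OF Ks \<rho>] kraus_apply_carrier[OF Ls \<rho>]
    by (intro eq_matI) (simp_all add: kraus_apply_index[OF Ks \<rho>] kraus_apply_index[OF Ls \<rho>] choi_eq_all)
qed

lemma adjoint_mult_self_index:
  "K \<in> carrier_mat d d \<Longrightarrow> l < d \<Longrightarrow> m < d \<Longrightarrow>
   (mat_adjoint K * K) $$ (l, m) = (\<Sum>i<d. cnj (K $$ (i, l)) * K $$ (i, m))"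
  using mat_adjoint_carrier[of K d]
  by (auto simp: scalar_prod_def mat_adjoint_index lessThan_atLeast0 intro!: sum.cong)

lemma trace_preserving_choi:
  assumes Ks: "\<forall>K\<in>set Ks. K \<in> carrier_mat d d"
    and tp: "msum d (\<lambda>K. mat_adjoint K * K) Ks = 1\<^sub>m d" and "l < d" "m < d"
  shows "(\<Sum>i<d. choi Ks i m i l) = (if l = m then 1 else 0)"
proof -
  have "(\<Sum>i<d. choi Ks i m i l) = (\<Sum>K\<leftarrow>Ks. \<Sum>i<d. cnj (K $$ (i, l)) * K $$ (i, m))"
    unfolding choi_def by (simp add: sum_sum_list_swap mult.commute)
  also have "\<dots> = (\<Sum>K\<leftarrow>Ks. (mat_adjoint K * K) $$ (l, m))"
    using Ks adjoint_mult_self_index[OF _ \<open>l < d\<close> \<open>m < d\<close>]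
    by (intro arg_cong[where f = sum_list] map_cong refl) auto
  also have "\<dots> = msum d (\<lambda>K. mat_adjoint K * K) Ks $$ (l, m)"
    using Ks assms(3,4) by (subst msum_index) (auto intro: mult_carrier_mat mat_adjoint_carrier)
  also have "\<dots> = (if l = m then 1 else 0)"
    using tp assms(3,4) by simp
  finally show ?thesis .
qed

text \<open>The Hermitian matrix [[\<alpha>, x], [cnj x, \<beta>]] is positive semidefinite.\<close>

definition psd2 :: "real \<Rightarrow> complex \<Rightarrow> real \<Rightarrow> bool" where
  "psd2 \<alpha> x \<beta> \<longleftrightarrow> 0 \<le> \<alpha> \<and> 0 \<le> \<beta> \<and> (cmod x)\<^sup>2 \<le> \<alpha> * \<beta>"

lemma psd2_zero: "psd2 0 0 0"
  by (simp add: psd2_def)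

lemma psd2_rank_one: "psd2 ((cmod p)\<^sup>2) (p * cnj q) ((cmod q)\<^sup>2)"
  by (simp add: psd2_def norm_mult power_mult_distrib)

lemma psd2_add:
  assumes "psd2 \<alpha> x \<beta>" "psd2 \<alpha>' y \<beta>'"
  shows "psd2 (\<alpha> + \<alpha>') (x + y) (\<beta> + \<beta>')"
proof -
  define u v where "u = cmod x" and "v = cmod y"
  have nonneg: "0 \<le> \<alpha>" "0 \<le> \<beta>" "0 \<le> \<alpha>'" "0 \<le> \<beta>'" "0 \<le> u" "0 \<le> v"
    using assms unfolding psd2_def u_def v_def by auto
  have u: "u\<^sup>2 \<le> \<alpha> * \<beta>" and v: "v\<^sup>2 \<le> \<alpha>' * \<beta>'"
    using assms unfolding psd2_def u_def v_def by auto
  have "(2 * u * v)\<^sup>2 = 4 * (u\<^sup>2 * v\<^sup>2)"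
    by (simp add: power2_eq_square)
  also have "\<dots> \<le> 4 * ((\<alpha> * \<beta>) * (\<alpha>' * \<beta>'))"
    using u v nonneg by (simp add: mult_mono)
  also have "\<dots> \<le> (\<alpha> * \<beta>' - \<alpha>' * \<beta>)\<^sup>2 + 4 * ((\<alpha> * \<beta>) * (\<alpha>' * \<beta>'))"
    by simp
  also have "\<dots> = (\<alpha> * \<beta>' + \<alpha>' * \<beta>)\<^sup>2"
    by (simp add: power2_eq_square algebra_simps)
  finally have "(2 * u * v)\<^sup>2 \<le> (\<alpha> * \<beta>' + \<alpha>' * \<beta>)\<^sup>2" .
  then have uv: "2 * u * v \<le> \<alpha> * \<beta>' + \<alpha>' * \<beta>"
    by (rule power2_le_imp_le) (simp add: nonneg)
  have "(cmod (x + y))\<^sup>2 \<le> (u + v)\<^sup>2"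
    unfolding u_def v_def by (intro power_mono norm_triangle_ineq) simp
  also have "\<dots> = u\<^sup>2 + 2 * u * v + v\<^sup>2"
    by (simp add: power2_sum)
  also have "\<dots> \<le> \<alpha> * \<beta> + (\<alpha> * \<beta>' + \<alpha>' * \<beta>) + \<alpha>' * \<beta>'"
    using u v uv by linarith
  also have "\<dots> = (\<alpha> + \<alpha>') * (\<beta> + \<beta>')"
    by (simp add: algebra_simps)
  finally show ?thesis
    using nonneg unfolding psd2_def by simp
qed

lemma real_interval_monotone_fixpoint:
  fixes g :: "real \<Rightarrow> real"
  assumes "a \<le> b" "mono_on {a..b} g" "g ` {a..b} \<subseteq> {a..b}"
  shows "\<exists>t\<in>{a..b}. g t = t"
proof -
  define S where "S = {t \<in> {a..b}. t \<le> g t}"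
  have "a \<in> S" and "bdd_above S"
    using assms(1) assms(3)[unfolded image_subset_iff] unfolding S_def by auto
  have s: "Sup S \<in> {a..b}"
    unfolding atLeastAtMost_iff
  proof
    show "a \<le> Sup S"
      using \<open>a \<in> S\<close> \<open>bdd_above S\<close> by (rule cSup_upper)
    show "Sup S \<le> b"
      using \<open>a \<in> S\<close> by (intro cSup_least) (auto simp: S_def)
  qed
  have "t \<le> g (Sup S)" if "t \<in> S" for t
  proof -
    have "t \<in> {a..b}" "t \<le> g t"
      using that unfolding S_def by auto
    moreover have "g t \<le> g (Sup S)"
      using mono_onD[OF assms(2) \<open>t \<in> {a..b}\<close> s cSup_upper[OF that \<open>bdd_above S\<close>]] .
    ultimately show ?thesis
      by linarith
  qed
  then have "Sup S \<le> g (Sup S)"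
    using \<open>a \<in> S\<close> by (intro cSup_least) auto
  moreover have "g (Sup S) \<in> {a..b}"
    using assms(3) s by blast
  ultimately have "g (Sup S) \<in> S"
    using mono_onD[OF assms(2) s] unfolding S_def by blast
  then have "g (Sup S) \<le> Sup S"
    using \<open>bdd_above S\<close> by (rule cSup_upper)
  with \<open>Sup S \<le> g (Sup S)\<close> s show ?thesis
    by force
qed

lemma quotient_by_complement:
  fixes a b c e :: real
  assumes "0 \<le> a" "0 \<le> b" "0 \<le> c" "c \<le> a * b"
  shows "(\<lambda>s. c / (a + e - s)) ` {0..e} \<subseteq> {0..b}"
    and "mono_on {0..e} (\<lambda>s. c / (a + e - s))"
    and "s \<in> {0..e} \<Longrightarrow> (a + e - s) * (c / (a + e - s)) = c"
proof -
  have le: "a \<le> a + e - s" and le_mult: "a * b \<le> (a + e - s) * b" if "s \<le> e" for s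
    using that assms(2) by (simp_all add: mult_right_mono)
  have pos: "0 < a + e - s" if "s \<le> e" "c \<noteq> 0" for s
  proof -
    have "0 < a * b"
      using assms that(2) by simp
    then have "0 < a"
      using assms(1,2) zero_less_mult_pos2 by fastforce
    then show ?thesis
      using le[OF that(1)] by simp
  qed
  show "(\<lambda>s. c / (a + e - s)) ` {0..e} \<subseteq> {0..b}"
  proof clarify
    fix s assume s: "s \<in> {0..e}"
    show "c / (a + e - s) \<in> {0..b}"
    proof (cases "c = 0")
      case False
      have "c \<le> (a + e - s) * b"
        using assms(4) le_mult[of s] s by simp
      moreover have "0 < a + e - s"
        using pos[of s] False s by simp
      ultimately show ?thesis
        using assms(3) by (simp add: divide_le_eq mult.commute)
    qed (use assms(2) in simp)
  qed
  show "mono_on {0..e} (\<lambda>s. c / (a + e - s))"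
  proof (rule mono_onI)
    fix r s assume "r \<in> {0..e}" "s \<in> {0..e}" "r \<le> s"
    then show "c / (a + e - r) \<le> c / (a + e - s)"
      using assms(3) pos[of s] by (cases "c = 0") (auto intro!: divide_left_mono)
  qed
  show "s \<in> {0..e} \<Longrightarrow> (a + e - s) * (c / (a + e - s)) = c"
    using pos[of s] by (cases "c = 0") auto
qed

text \<open>The sum constraints link the unknowns in the cycle A1, A3, B3, B2, A2, A4, B4, B1, A1. Choosing
  A1 = t forces the others in turn, and closing the cycle is a fixed point of a monotone self-map
  of [0, \<alpha>1].\<close>

lemma cycle_exact_products:
  fixes \<alpha>1 \<alpha>2 \<alpha>3 \<alpha>4 \<beta>1 \<beta>2 \<beta>3 \<beta>4 c1 c2 c3 c4 :: real
  assumes nonneg: "0 \<le> \<alpha>1" "0 \<le> \<alpha>2" "0 \<le> \<alpha>3" "0 \<le> \<alpha>4" "0 \<le> \<beta>1" "0 \<le> \<beta>2" "0 \<le> \<beta>3" "0 \<le> \<beta>4"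
    and c: "0 \<le> c1" "0 \<le> c2" "0 \<le> c3" "0 \<le> c4"
    and c_le: "c1 \<le> \<alpha>1 * \<beta>1" "c2 \<le> \<alpha>2 * \<beta>2" "c3 \<le> \<alpha>3 * \<beta>3" "c4 \<le> \<alpha>4 * \<beta>4"
  obtains A1 A2 A3 A4 B1 B2 B3 B4 where
    "0 \<le> A1" "0 \<le> A2" "0 \<le> A3" "0 \<le> A4" "0 \<le> B1" "0 \<le> B2" "0 \<le> B3" "0 \<le> B4"
    "A1 + A3 = \<alpha>1 + \<alpha>3" "B1 + B4 = \<beta>1 + \<beta>4" "A2 + A4 = \<alpha>2 + \<alpha>4" "B2 + B3 = \<beta>2 + \<beta>3"
    "A1 * B1 = c1" "A2 * B2 = c2" "A3 * B3 = c3" "A4 * B4 = c4"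
proof -
  define f3 where "f3 = (\<lambda>s. c3 / (\<alpha>3 + \<alpha>1 - s))"
  define f2 where "f2 = (\<lambda>s. c2 / (\<beta>2 + \<beta>3 - s))"
  define f4 where "f4 = (\<lambda>s. c4 / (\<alpha>4 + \<alpha>2 - s))"
  define f1 where "f1 = (\<lambda>s. c1 / (\<beta>1 + \<beta>4 - s))"
  note q3 = quotient_by_complement[OF nonneg(3,7) c(3) c_le(3), where e = \<alpha>1, folded f3_def]
  note q2 = quotient_by_complement[OF nonneg(6,2) c(2) c_le(2)[unfolded mult.commute[of \<alpha>2]],
      where e = \<beta>3, folded f2_def]
  note q4 = quotient_by_complement[OF nonneg(4,8) c(4) c_le(4), where e = \<alpha>2, folded f4_def]
  note q1 = quotient_by_complement[OF nonneg(5,1) c(1) c_le(1)[unfolded mult.commute[of \<alpha>1]],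
      where e = \<beta>4, folded f1_def]
  have i1: "(f2 \<circ> f3) ` {0..\<alpha>1} \<subseteq> {0..\<alpha>2}"
    using order_trans[OF image_mono[OF q3(1)] q2(1)] by (simp add: image_comp)
  have i2: "(f4 \<circ> (f2 \<circ> f3)) ` {0..\<alpha>1} \<subseteq> {0..\<beta>4}"
    using order_trans[OF image_mono[OF i1] q4(1)] by (simp add: image_comp)
  have i3: "(f1 \<circ> (f4 \<circ> (f2 \<circ> f3))) ` {0..\<alpha>1} \<subseteq> {0..\<alpha>1}"
    using order_trans[OF image_mono[OF i2] q1(1)] by (simp add: image_comp)
  have "mono_on {0..\<alpha>1} (f1 \<circ> (f4 \<circ> (f2 \<circ> f3)))"
    using monotone_on_o[OF q1(2) monotone_on_o[OF q4(2) monotone_on_o[OF q2(2) q3(2) q3(1)] i1] i2] .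
  then obtain t where t: "t \<in> {0..\<alpha>1}" "f1 (f4 (f2 (f3 t))) = t"
    using real_interval_monotone_fixpoint[OF nonneg(1) _ i3] by fastforce
  define B3 A2 B4 where "B3 = f3 t" and "A2 = f2 B3" and "B4 = f4 A2"
  have B3: "B3 \<in> {0..\<beta>3}" and A2: "A2 \<in> {0..\<alpha>2}" and B4: "B4 \<in> {0..\<beta>4}"
    using t(1) q3(1) q2(1) q4(1) unfolding B3_def A2_def B4_def by blast+
  have "f1 B4 = t"
    using t(2) unfolding B4_def A2_def B3_def .
  have prod1: "t * (\<beta>1 + \<beta>4 - B4) = c1"
    using q1(3)[OF B4] by (simp only: \<open>f1 B4 = t\<close>[symmetric] f1_def mult.commute)
  have prod2: "A2 * (\<beta>2 + \<beta>3 - B3) = c2"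
    using q2(3)[OF B3] unfolding A2_def f2_def by (simp only: mult.commute)
  have prod3: "(\<alpha>3 + \<alpha>1 - t) * B3 = c3"
    using q3(3)[OF t(1)] unfolding B3_def f3_def .
  have prod4: "(\<alpha>4 + \<alpha>2 - A2) * B4 = c4"
    using q4(3)[OF A2] unfolding B4_def f4_def .
  show thesis
    by (rule that[OF _ _ _ _ _ _ _ _ _ _ _ _ prod1 prod2 prod3 prod4]) (use t(1) B3 A2 B4 nonneg in auto)
qed

lemma rank_one_factor:
  fixes A B :: real and x :: complex
  assumes "0 \<le> A" "0 \<le> B" "A * B = (cmod x)\<^sup>2"
  obtains a :: real and b :: complex where "a\<^sup>2 = A" "(cmod b)\<^sup>2 = B" "of_real a * cnj b = x"
proof (cases "A = 0")
  case True
  then have "x = 0"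
    using assms by simp
  with True assms(2) show thesis
    by (intro that[of 0 "of_real (sqrt B)"]) simp_all
next
  case False
  define a where "a = sqrt A"
  have a: "0 < a" "a\<^sup>2 = A"
    using False assms(1) unfolding a_def by auto
  have "(cmod (cnj x / of_real a))\<^sup>2 = (cmod x)\<^sup>2 / A"
    using a by (simp add: norm_divide power_divide)
  also have "\<dots> = B"
    using assms(3) False by (simp add: field_simps)
  finally show thesis
    using a by (intro that[of a "cnj x / of_real a"]) simp_all
qed

lemma psd2_cycle_factor:
  assumes "psd2 \<alpha>1 x1 \<beta>1" "psd2 \<alpha>2 x2 \<beta>2" "psd2 \<alpha>3 x3 \<beta>3" "psd2 \<alpha>4 x4 \<beta>4"
  obtains a1 a2 a3 a4 :: real and b1 b2 b3 b4 :: complex where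
    "a1\<^sup>2 + a3\<^sup>2 = \<alpha>1 + \<alpha>3" "(cmod b1)\<^sup>2 + (cmod b4)\<^sup>2 = \<beta>1 + \<beta>4"
    "a2\<^sup>2 + a4\<^sup>2 = \<alpha>2 + \<alpha>4" "(cmod b2)\<^sup>2 + (cmod b3)\<^sup>2 = \<beta>2 + \<beta>3"
    "of_real a1 * cnj b1 = x1" "of_real a2 * cnj b2 = x2" "of_real a3 * cnj b3 = x3" "of_real a4 * cnj b4 = x4"
proof -
  have p1: "0 \<le> \<alpha>1" "0 \<le> \<beta>1" "(cmod x1)\<^sup>2 \<le> \<alpha>1 * \<beta>1"
    and p2: "0 \<le> \<alpha>2" "0 \<le> \<beta>2" "(cmod x2)\<^sup>2 \<le> \<alpha>2 * \<beta>2"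
    and p3: "0 \<le> \<alpha>3" "0 \<le> \<beta>3" "(cmod x3)\<^sup>2 \<le> \<alpha>3 * \<beta>3"
    and p4: "0 \<le> \<alpha>4" "0 \<le> \<beta>4" "(cmod x4)\<^sup>2 \<le> \<alpha>4 * \<beta>4"
    using assms unfolding psd2_def by auto
  obtain A1 A2 A3 A4 B1 B2 B3 B4 where
    nonneg: "0 \<le> A1" "0 \<le> A2" "0 \<le> A3" "0 \<le> A4" "0 \<le> B1" "0 \<le> B2" "0 \<le> B3" "0 \<le> B4"
    and sums: "A1 + A3 = \<alpha>1 + \<alpha>3" "B1 + B4 = \<beta>1 + \<beta>4" "A2 + A4 = \<alpha>2 + \<alpha>4" "B2 + B3 = \<beta>2 + \<beta>3"
    and products: "A1 * B1 = (cmod x1)\<^sup>2" "A2 * B2 = (cmod x2)\<^sup>2" "A3 * B3 = (cmod x3)\<^sup>2" "A4 * B4 = (cmod x4)\<^sup>2"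
    using cycle_exact_products[OF p1(1) p2(1) p3(1) p4(1) p1(2) p2(2) p3(2) p4(2)
        zero_le_power2 zero_le_power2 zero_le_power2 zero_le_power2 p1(3) p2(3) p3(3) p4(3)] .
  obtain a1 b1 where ab1: "a1\<^sup>2 = A1" "(cmod b1)\<^sup>2 = B1" "of_real a1 * cnj b1 = x1"
    using rank_one_factor[OF nonneg(1,5) products(1)] .
  obtain a2 b2 where ab2: "a2\<^sup>2 = A2" "(cmod b2)\<^sup>2 = B2" "of_real a2 * cnj b2 = x2"
    using rank_one_factor[OF nonneg(2,6) products(2)] .
  obtain a3 b3 where ab3: "a3\<^sup>2 = A3" "(cmod b3)\<^sup>2 = B3" "of_real a3 * cnj b3 = x3"
    using rank_one_factor[OF nonneg(3,7) products(3)] .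
  obtain a4 b4 where ab4: "a4\<^sup>2 = A4" "(cmod b4)\<^sup>2 = B4" "of_real a4 * cnj b4 = x4"
    using rank_one_factor[OF nonneg(4,8) products(4)] .
  show thesis
    using ab1 ab2 ab3 ab4 sums by (intro that[OF _ _ _ _ ab1(3) ab2(3) ab3(3) ab4(3)]) simp_all
qed
lemma choi_incoherent_column:
  assumes "\<forall>K\<in>set Ks. incoherent_kraus d K" "c < d" "i < d" "j < d" "i \<noteq> j"
  shows "choi Ks i c j c = 0"
  using assms(1)
proof (induction Ks)
  case (Cons K Ks)
  have "K $$ (i, c) * K $$ (j, c) = 0"
    using Cons.prems by (intro incoherent_kraus_column[OF _ assms(2-5)]) simp
  then have "K $$ (i, c) * cnj (K $$ (j, c)) = 0"
    by auto
  with Cons show ?case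
    by simp
qed simp

text \<open>Each incoherent qubit Kraus operator has the shape of K1, K2, K3 or K4 of the theorem, and its
  contribution to the Choi matrix lands in the block of that shape.\<close>

lemma incoherent_choi_decomposition:
  assumes "\<forall>K\<in>set Ks. incoherent_kraus 2 K"
  shows "\<exists>\<alpha>1 \<alpha>2 \<alpha>3 \<alpha>4 \<beta>1 \<beta>2 \<beta>3 \<beta>4.
    psd2 \<alpha>1 (choi Ks 0 0 0 1) \<beta>1 \<and> psd2 \<alpha>2 (choi Ks 1 0 1 1) \<beta>2 \<and>
    psd2 \<alpha>3 (choi Ks 0 0 1 1) \<beta>3 \<and> psd2 \<alpha>4 (choi Ks 1 0 0 1) \<beta>4 \<and>
    \<alpha>1 + \<alpha>3 = kraus_weight Ks 0 0 \<and> \<beta>1 + \<beta>4 = kraus_weight Ks 0 1 \<and>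
    \<alpha>2 + \<alpha>4 = kraus_weight Ks 1 0 \<and> \<beta>2 + \<beta>3 = kraus_weight Ks 1 1"
  using assms
proof (induction Ks)
  case Nil
  show ?case
    using psd2_zero by (intro exI[of _ 0]) simp
next
  case (Cons K Ks)
  then obtain \<alpha>1 \<alpha>2 \<alpha>3 \<alpha>4 \<beta>1 \<beta>2 \<beta>3 \<beta>4 where
    psd: "psd2 \<alpha>1 (choi Ks 0 0 0 1) \<beta>1" "psd2 \<alpha>2 (choi Ks 1 0 1 1) \<beta>2"
      "psd2 \<alpha>3 (choi Ks 0 0 1 1) \<beta>3" "psd2 \<alpha>4 (choi Ks 1 0 0 1) \<beta>4"
    and sums: "\<alpha>1 + \<alpha>3 = kraus_weight Ks 0 0" "\<beta>1 + \<beta>4 = kraus_weight Ks 0 1"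
      "\<alpha>2 + \<alpha>4 = kraus_weight Ks 1 0" "\<beta>2 + \<beta>3 = kraus_weight Ks 1 1"
    by auto
  let ?w = "\<lambda>i l. (cmod (K $$ (i, l)))\<^sup>2"
  have "K $$ (0, 0) * K $$ (1, 0) = 0" "K $$ (0, 1) * K $$ (1, 1) = 0"
    using Cons.prems by (auto simp: incoherent_kraus_iff)
  then consider "K $$ (1, 0) = 0" "K $$ (1, 1) = 0" | "K $$ (0, 0) = 0" "K $$ (0, 1) = 0"
    | "K $$ (1, 0) = 0" "K $$ (0, 1) = 0" | "K $$ (0, 0) = 0" "K $$ (1, 1) = 0"
    by auto
  then show ?case
  proof cases
    case 1
    then have new: "psd2 (?w 0 0 + \<alpha>1) (choi (K # Ks) 0 0 0 1) (?w 0 1 + \<beta>1)"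
      using psd2_add[OF psd2_rank_one psd(1)] by simp
    show ?thesis
      by (rule exI[of _ "?w 0 0 + \<alpha>1"], rule exI[of _ \<alpha>2], rule exI[of _ \<alpha>3], rule exI[of _ \<alpha>4],
          rule exI[of _ "?w 0 1 + \<beta>1"], rule exI[of _ \<beta>2], rule exI[of _ \<beta>3], rule exI[of _ \<beta>4])
        (use 1 psd sums new in simp)
  next
    case 2
    then have new: "psd2 (?w 1 0 + \<alpha>2) (choi (K # Ks) 1 0 1 1) (?w 1 1 + \<beta>2)"
      using psd2_add[OF psd2_rank_one psd(2)] by simp
    show ?thesis
      by (rule exI[of _ \<alpha>1], rule exI[of _ "?w 1 0 + \<alpha>2"], rule exI[of _ \<alpha>3], rule exI[of _ \<alpha>4],
          rule exI[of _ \<beta>1], rule exI[of _ "?w 1 1 + \<beta>2"], rule exI[of _ \<beta>3], rule exI[of _ \<beta>4])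
        (use 2 psd sums new in simp)
  next
    case 3
    then have new: "psd2 (?w 0 0 + \<alpha>3) (choi (K # Ks) 0 0 1 1) (?w 1 1 + \<beta>3)"
      using psd2_add[OF psd2_rank_one psd(3)] by simp
    show ?thesis
      by (rule exI[of _ \<alpha>1], rule exI[of _ \<alpha>2], rule exI[of _ "?w 0 0 + \<alpha>3"], rule exI[of _ \<alpha>4],
          rule exI[of _ \<beta>1], rule exI[of _ \<beta>2], rule exI[of _ "?w 1 1 + \<beta>3"], rule exI[of _ \<beta>4])
        (use 3 psd sums new in simp)
  next
    case 4
    then have new: "psd2 (?w 1 0 + \<alpha>4) (choi (K # Ks) 1 0 0 1) (?w 0 1 + \<beta>4)"
      using psd2_add[OF psd2_rank_one psd(4)] by simp
    show ?thesis
      by (rule exI[of _ \<alpha>1], rule exI[of _ \<alpha>2], rule exI[of _ \<alpha>3], rule exI[of _ "?w 1 0 + \<alpha>4"],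
          rule exI[of _ \<beta>1], rule exI[of _ \<beta>2], rule exI[of _ \<beta>3], rule exI[of _ "?w 0 1 + \<beta>4"])
        (use 4 psd sums new in simp)
  qed
qed

lemma incoherent_choi_rank_one_blocks:
  assumes "\<forall>K\<in>set Ks. incoherent_kraus 2 K"
  obtains a1 a2 a3 a4 :: real and b1 b2 b3 b4 :: complex where
    "kraus_weight Ks 0 0 = a1\<^sup>2 + a3\<^sup>2" "kraus_weight Ks 0 1 = (cmod b1)\<^sup>2 + (cmod b4)\<^sup>2"
    "kraus_weight Ks 1 0 = a2\<^sup>2 + a4\<^sup>2" "kraus_weight Ks 1 1 = (cmod b2)\<^sup>2 + (cmod b3)\<^sup>2"
    "choi Ks 0 0 0 1 = of_real a1 * cnj b1" "choi Ks 1 0 1 1 = of_real a2 * cnj b2"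
    "choi Ks 0 0 1 1 = of_real a3 * cnj b3" "choi Ks 1 0 0 1 = of_real a4 * cnj b4"
proof -
  obtain \<alpha>1 \<alpha>2 \<alpha>3 \<alpha>4 \<beta>1 \<beta>2 \<beta>3 \<beta>4 where
    psd: "psd2 \<alpha>1 (choi Ks 0 0 0 1) \<beta>1" "psd2 \<alpha>2 (choi Ks 1 0 1 1) \<beta>2"
      "psd2 \<alpha>3 (choi Ks 0 0 1 1) \<beta>3" "psd2 \<alpha>4 (choi Ks 1 0 0 1) \<beta>4"
    and weights: "\<alpha>1 + \<alpha>3 = kraus_weight Ks 0 0" "\<beta>1 + \<beta>4 = kraus_weight Ks 0 1"
      "\<alpha>2 + \<alpha>4 = kraus_weight Ks 1 0" "\<beta>2 + \<beta>3 = kraus_weight Ks 1 1"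
    using incoherent_choi_decomposition[OF assms] by blast
  obtain a1 a2 a3 a4 b1 b2 b3 b4 where
    ab: "a1\<^sup>2 + a3\<^sup>2 = \<alpha>1 + \<alpha>3" "(cmod b1)\<^sup>2 + (cmod b4)\<^sup>2 = \<beta>1 + \<beta>4"
      "a2\<^sup>2 + a4\<^sup>2 = \<alpha>2 + \<alpha>4" "(cmod b2)\<^sup>2 + (cmod b3)\<^sup>2 = \<beta>2 + \<beta>3"
    and cross: "choi Ks 0 0 0 1 = of_real a1 * cnj b1" "choi Ks 1 0 1 1 = of_real a2 * cnj b2"
      "choi Ks 0 0 1 1 = of_real a3 * cnj b3" "choi Ks 1 0 0 1 = of_real a4 * cnj b4"
    by (rule psd2_cycle_factor[OF psd]) simp_all
  show thesis
    using ab weights by (intro that[OF _ _ _ _ cross]) simp_all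
qed

lemma trace_preserving_choi_2:
  assumes Ks: "\<forall>K\<in>set Ks. K \<in> carrier_mat 2 2" and tp: "msum 2 (\<lambda>K. mat_adjoint K * K) Ks = 1\<^sub>m 2"
  shows "kraus_weight Ks 0 0 + kraus_weight Ks 1 0 = 1"
    and "kraus_weight Ks 0 1 + kraus_weight Ks 1 1 = 1"
    and "choi Ks 0 0 0 1 + choi Ks 1 0 1 1 = 0"
proof -
  have "kraus_weight Ks 0 l + kraus_weight Ks 1 l = 1" if "l < 2" for l
  proof -
    have "complex_of_real (kraus_weight Ks 0 l + kraus_weight Ks 1 l) = 1"
      using trace_preserving_choi[OF Ks tp that that] by (simp add: sum_lessThan_2 choi_same_index)
    then show ?thesis
      by (simp only: of_real_eq_1_iff)
  qed
  then show "kraus_weight Ks 0 0 + kraus_weight Ks 1 0 = 1" "kraus_weight Ks 0 1 + kraus_weight Ks 1 1 = 1"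
    by simp_all
  show "choi Ks 0 0 0 1 + choi Ks 1 0 1 1 = 0"
    using trace_preserving_choi[OF Ks tp, of 1 0] by (simp add: sum_lessThan_2)
qed

lemma mat_of_rows_list_2_carrier: "mat_of_rows_list 2 [[a, b], [c, d]] \<in> carrier_mat 2 2"
  unfolding mat_of_rows_list_def by (metis mat_carrier length_Cons list.size(3) numeral_2_eq_2)

lemma mat_of_rows_list_2_index [simp]:
  "mat_of_rows_list 2 [[a, b], [c, d]] $$ (0, 0) = a"
  "mat_of_rows_list 2 [[a, b], [c, d]] $$ (0, 1) = b"
  "mat_of_rows_list 2 [[a, b], [c, d]] $$ (1, 0) = c"
  "mat_of_rows_list 2 [[a, b], [c, d]] $$ (1, 1) = d"
  "mat_of_rows_list 2 [[a, b], [c, d]] $$ (0, Suc 0) = b"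
  "mat_of_rows_list 2 [[a, b], [c, d]] $$ (Suc 0, 0) = c"
  "mat_of_rows_list 2 [[a, b], [c, d]] $$ (Suc 0, Suc 0) = d"
  by (simp_all add: mat_of_rows_list_def)

lemma kraus_apply_eq_four_shapes:
  assumes inc: "\<forall>K\<in>set Ks. incoherent_kraus 2 K" and \<rho>: "\<rho> \<in> carrier_mat 2 2"
    and weights: "kraus_weight Ks 0 0 = a1\<^sup>2 + a3\<^sup>2" "kraus_weight Ks 0 1 = (cmod b1)\<^sup>2 + (cmod b4)\<^sup>2"
      "kraus_weight Ks 1 0 = a2\<^sup>2 + a4\<^sup>2" "kraus_weight Ks 1 1 = (cmod b2)\<^sup>2 + (cmod b3)\<^sup>2"
    and cross: "choi Ks 0 0 0 1 = of_real a1 * cnj b1" "choi Ks 1 0 1 1 = of_real a2 * cnj b2"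
      "choi Ks 0 0 1 1 = of_real a3 * cnj b3" "choi Ks 1 0 0 1 = of_real a4 * cnj b4"
  shows "kraus_apply 2 Ks \<rho> = kraus_apply 2
    [mat_of_rows_list 2 [[of_real a1, b1], [0, 0]], mat_of_rows_list 2 [[0, 0], [of_real a2, b2]],
     mat_of_rows_list 2 [[of_real a3, 0], [0, b3]], mat_of_rows_list 2 [[0, b4], [of_real a4, 0]]] \<rho>"
proof (rule kraus_apply_eqI[OF _ _ _ \<rho>])
  show "\<forall>K\<in>set Ks. K \<in> carrier_mat 2 2"
    using inc by (simp add: incoherent_kraus_iff)
  show "\<forall>K\<in>set [mat_of_rows_list 2 [[of_real a1, b1], [0, 0]], mat_of_rows_list 2 [[0, 0], [of_real a2, b2]],
     mat_of_rows_list 2 [[of_real a3, 0], [0, b3]], mat_of_rows_list 2 [[0, b4], [of_real a4, 0]]].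
     K \<in> carrier_mat 2 2"
    by (simp add: mat_of_rows_list_2_carrier)
  have zero: "choi Ks 0 0 1 0 = 0" "choi Ks 0 1 1 1 = 0"
    using choi_incoherent_column[OF inc] by simp_all
  have "choi Ks 0 1 1 0 = of_real a4 * b4"
    using cnj_choi[of Ks 1 0 0 1] cross(4) by simp
  moreover have "choi Ks i l i l = of_real (kraus_weight Ks i l)" for i l
    by (rule choi_same_index)
  ultimately show "choi Ks i l j m = choi
    [mat_of_rows_list 2 [[of_real a1, b1], [0, 0]], mat_of_rows_list 2 [[0, 0], [of_real a2, b2]],
     mat_of_rows_list 2 [[of_real a3, 0], [0, b3]], mat_of_rows_list 2 [[0, b4], [of_real a4, 0]]] i l j m"
    if "i < 2" "l < 2" "j < 2" "m < 2" "i < j \<or> i = j \<and> l \<le> m" for i l j m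
    using that zero weights cross unfolding less_2_cases
    by (elim disjE conjE) (simp_all add: complex_mult_cnj_cmod power2_eq_square)
qed

theorem proposition1:
  fixes \<Phi> :: "complex mat \<Rightarrow> complex mat"
  assumes "IO 2 \<Phi>"
  shows "\<exists>(a1::real) a2 a3 a4 (b1::complex) b2 b3 b4.
    a1\<^sup>2 + a2\<^sup>2 + a3\<^sup>2 + a4\<^sup>2 = 1 \<and>
    (cmod b1)\<^sup>2 + (cmod b2)\<^sup>2 + (cmod b3)\<^sup>2 + (cmod b4)\<^sup>2 = 1 \<and>
    complex_of_real a1 * b1 + complex_of_real a2 * b2 = 0 \<and>
    (let K1 = mat_of_rows_list 2 [[complex_of_real a1, b1], [0, 0]];
         K2 = mat_of_rows_list 2 [[0, 0], [complex_of_real a2, b2]];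
         K3 = mat_of_rows_list 2 [[complex_of_real a3, 0], [0, b3]];
         K4 = mat_of_rows_list 2 [[0, b4], [complex_of_real a4, 0]]
     in (\<forall>K\<in>set [K1, K2, K3, K4]. incoherent_kraus 2 K) \<and>
        (\<forall>\<rho>\<in>carrier_mat 2 2. \<Phi> \<rho> = kraus_apply 2 [K1, K2, K3, K4] \<rho>))"
proof -
  obtain Ks where inc: "\<forall>K\<in>set Ks. incoherent_kraus 2 K"
    and tp: "msum 2 (\<lambda>K. mat_adjoint K * K) Ks = 1\<^sub>m 2"
    and \<Phi>: "\<forall>\<rho>\<in>carrier_mat 2 2. \<Phi> \<rho> = kraus_apply 2 Ks \<rho>"
    using assms unfolding IO_def by blast
  obtain a1 a2 a3 a4 b1 b2 b3 b4 where
    w: "kraus_weight Ks 0 0 = a1\<^sup>2 + a3\<^sup>2" "kraus_weight Ks 0 1 = (cmod b1)\<^sup>2 + (cmod b4)\<^sup>2"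
      "kraus_weight Ks 1 0 = a2\<^sup>2 + a4\<^sup>2" "kraus_weight Ks 1 1 = (cmod b2)\<^sup>2 + (cmod b3)\<^sup>2"
    and cross: "choi Ks 0 0 0 1 = of_real a1 * cnj b1" "choi Ks 1 0 1 1 = of_real a2 * cnj b2"
      "choi Ks 0 0 1 1 = of_real a3 * cnj b3" "choi Ks 1 0 0 1 = of_real a4 * cnj b4"
    using incoherent_choi_rank_one_blocks[OF inc] .
  have "\<forall>K\<in>set Ks. K \<in> carrier_mat 2 2"
    using inc by (simp add: incoherent_kraus_iff)
  note tp2 = trace_preserving_choi_2[OF this tp]
  define Ls where "Ls = [mat_of_rows_list 2 [[complex_of_real a1, b1], [0, 0]],
    mat_of_rows_list 2 [[0, 0], [complex_of_real a2, b2]],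
    mat_of_rows_list 2 [[complex_of_real a3, 0], [0, b3]],
    mat_of_rows_list 2 [[0, b4], [complex_of_real a4, 0]]]"
  have "\<forall>K\<in>set Ls. incoherent_kraus 2 K"
    unfolding Ls_def by (simp add: incoherent_kraus_iff mat_of_rows_list_2_carrier less_2_cases)
  moreover have "\<forall>\<rho>\<in>carrier_mat 2 2. \<Phi> \<rho> = kraus_apply 2 Ls \<rho>"
    using \<Phi> kraus_apply_eq_four_shapes[OF inc _ w cross] unfolding Ls_def by simp
  moreover have "a1\<^sup>2 + a2\<^sup>2 + a3\<^sup>2 + a4\<^sup>2 = 1" "(cmod b1)\<^sup>2 + (cmod b2)\<^sup>2 + (cmod b3)\<^sup>2 + (cmod b4)\<^sup>2 = 1"
    using tp2(1,2) w by linarith+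
  moreover have "complex_of_real a1 * b1 + complex_of_real a2 * b2 = 0"
    using arg_cong[OF tp2(3), of cnj] cross(1,2) by simp
  ultimately show ?thesis
    unfolding Let_def Ls_def by blast
qed

end
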